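(* Let $f\in\omega^{\subset\omega}$, let $k,n\geq 1$, and suppose $U$ is a $(k(n-1)+1)$-branching set of extensions of $f$ with $U=\bigcup_{i<k}U_i$. Then some $U_i$ contains an $n$-branching set of extensions of $f$.
   Context: $\omega^{\subset\omega}$ is the set of partial functions from $\omega$ to $\omega$ with finite domain. For $f\in\omega^{\subset\omega}$, an $n$-branching set of extensions of $f$ of length $k$ is defined by induction on $k$: of length $1$, it is a set $U$ of $n$ functions such that for some fixed $x\notin\operatorname{dom}(f)$ each $g\in U$ satisfies $f\subseteq g$ and $\operatorname{dom}(g)=\operatorname{dom}(f)\cup\{x\}$; if $U_0$ is an $n$-branching set of extensions of $f$ of length $k$ and for each $g\in U_0$, $U_g$ is an $n$-branching set of extensions of $g$ of length $1$, then $\bigcup_{g\in U_0}U_g$ is an $n$-branching set of extensions of $f$ of length $k+1$. An $n$-branching set of extensions is one of some length $k\geq1$. *)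

theory Defs
  imports Main
begin

text \<open>Elements of omega^{subset omega}: partial maps nat \<rightharpoonup> nat with finite domain.
  Extension f \<subseteq> g is map inclusion.\<close>

definition one_step_ext :: "nat \<Rightarrow> (nat \<rightharpoonup> nat) \<Rightarrow> (nat \<rightharpoonup> nat) set \<Rightarrow> bool" where
  "one_step_ext n f U \<longleftrightarrow> finite U \<and> card U = n \<and>
     (\<exists>x. x \<notin> dom f \<and> (\<forall>g\<in>U. f \<subseteq>\<^sub>m g \<and> dom g = dom f \<union> {x}))"

inductive branch_ext :: "nat \<Rightarrow> (nat \<rightharpoonup> nat) \<Rightarrow> nat \<Rightarrow> (nat \<rightharpoonup> nat) set \<Rightarrow> bool" where
  base: "one_step_ext n f U \<Longrightarrow> branch_ext n f 1 U"
| step: "branch_ext n f k U0 \<Longrightarrow> (\<forall>g\<in>U0. one_step_ext n g (V g))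
          \<Longrightarrow> branch_ext n f (Suc k) (\<Union>g\<in>U0. V g)"

definition is_branching :: "nat \<Rightarrow> (nat \<rightharpoonup> nat) \<Rightarrow> (nat \<rightharpoonup> nat) set \<Rightarrow> bool" where
  "is_branching n f U \<longleftrightarrow> (\<exists>k\<ge>1. branch_ext n f k U)"

end

theory Submission
  imports Defs
begin

text \<open>Induction on the length of the branching set, keeping the length fixed. For length 1
  this is the pigeonhole principle: \<open>k(n-1)+1\<close> one-point extensions covered by \<open>k\<close> pieces
  put \<open>n\<close> of them into one piece. For the inductive step, colour each node \<open>g\<close> of the
  shorter branching set by a piece containing \<open>n\<close> of its one-point extensions; the induction
  hypothesis applied to this colouring yields an \<open>n\<close>-branching set of nodes of a single
  colour \<open>i\<close>, and their chosen extensions form an \<open>n\<close>-branching set inside piece \<open>i\<close>.\<close>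

lemma pigeonhole_subset_card:
  fixes A :: "'a set" and Us :: "nat \<Rightarrow> 'a set"
  assumes "finite A" "k * (n - 1) < card A" "A \<subseteq> (\<Union>i<k. Us i)"
  shows "\<exists>i<k. \<exists>S. S \<subseteq> A \<inter> Us i \<and> card S = n"
proof (rule ccontr)
  assume no_subset: "\<not> ?thesis"
  have small: "card (A \<inter> Us i) \<le> n - 1" if "i < k" for i
  proof (rule ccontr)
    assume "\<not> card (A \<inter> Us i) \<le> n - 1"
    then have "n \<le> card (A \<inter> Us i)" by simp
    then obtain S where "S \<subseteq> A \<inter> Us i" "card S = n"
      by (rule obtain_subset_with_card_n)
    then show False using no_subset that by blast
  qed
  have "A = (\<Union>i<k. A \<inter> Us i)" using assms(3) by blast
  then have "card A \<le> (\<Sum>i<k. card (A \<inter> Us i))"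
    by (metis card_UN_le finite_lessThan)
  also have "\<dots> \<le> (\<Sum>i<k. n - 1)" by (rule sum_mono) (use small in simp)
  finally show False using assms(2) by simp
qed

lemma one_step_ext_subset:
  assumes "one_step_ext N g V" "S \<subseteq> V" "card S = n"
  shows "one_step_ext n g S"
proof -
  from assms(1) obtain x where "finite V" "x \<notin> dom g"
    "\<forall>h\<in>V. g \<subseteq>\<^sub>m h \<and> dom h = dom g \<union> {x}"
    unfolding one_step_ext_def by blast
  with assms(2,3) show ?thesis
    unfolding one_step_ext_def by (metis finite_subset subsetD)
qed

lemma one_step_ext_pigeonhole:
  assumes "one_step_ext (k * (n - 1) + 1) g V" "V \<subseteq> (\<Union>i<k. Us i)"
  shows "\<exists>i<k. \<exists>S. S \<subseteq> V \<inter> Us i \<and> one_step_ext n g S"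
proof -
  have "finite V" "k * (n - 1) < card V"
    using assms(1) unfolding one_step_ext_def by auto
  then obtain i S where "i < k" "S \<subseteq> V \<inter> Us i" "card S = n"
    using pigeonhole_subset_card[OF _ _ assms(2)] by blast
  moreover from this have "one_step_ext n g S"
    using one_step_ext_subset[OF assms(1)] by blast
  ultimately show ?thesis by blast
qed

lemma branch_ext_pigeonhole:
  assumes "branch_ext (k * (n - 1) + 1) f m U" "U \<subseteq> (\<Union>i<k. Us i)"
  shows "\<exists>i<k. \<exists>W. W \<subseteq> Us i \<and> branch_ext n f m W"
  using assms
proof (induction "k * (n - 1) + 1" f m U arbitrary: Us rule: branch_ext.induct)
  case (base f U)
  from one_step_ext_pigeonhole[OF base.hyps base.prems] obtain i S
    where "i < k" "S \<subseteq> U \<inter> Us i" "one_step_ext n f S" by blast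
  moreover from \<open>one_step_ext n f S\<close> have "branch_ext n f 1 S" by (rule branch_ext.base)
  ultimately show ?case by blast
next
  case (step f m U0 V)
  have "\<forall>g\<in>U0. \<exists>i<k. \<exists>S. S \<subseteq> V g \<inter> Us i \<and> one_step_ext n g S"
  proof
    fix g assume "g \<in> U0"
    with step.hyps(3) have "one_step_ext (k * (n - 1) + 1) g (V g)" by blast
    moreover from \<open>g \<in> U0\<close> step.prems have "V g \<subseteq> (\<Union>i<k. Us i)" by blast
    ultimately show "\<exists>i<k. \<exists>S. S \<subseteq> V g \<inter> Us i \<and> one_step_ext n g S"
      by (rule one_step_ext_pigeonhole)
  qed
  then obtain colour S where chosen:
    "\<And>g. g \<in> U0 \<Longrightarrow> colour g < k \<and> S g \<subseteq> V g \<inter> Us (colour g) \<and> one_step_ext n g (S g)"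
    by metis
  have "U0 \<subseteq> (\<Union>i<k. {g\<in>U0. colour g = i})" using chosen by blast
  from step.hyps(2)[OF this] obtain i W0
    where "i < k" and W0: "W0 \<subseteq> {g\<in>U0. colour g = i}" "branch_ext n f m W0"
    by blast
  have "branch_ext n f (Suc m) (\<Union>g\<in>W0. S g)"
  proof (rule branch_ext.step)
    show "branch_ext n f m W0" by (fact W0(2))
    show "\<forall>g\<in>W0. one_step_ext n g (S g)" using chosen W0(1) by blast
  qed
  moreover have "(\<Union>g\<in>W0. S g) \<subseteq> Us i" using chosen W0(1) by blast
  ultimately show ?case using \<open>i < k\<close> by blast
qed

theorem mainTheorem8:
  fixes f :: "nat \<rightharpoonup> nat" and k n :: nat
    and U :: "(nat \<rightharpoonup> nat) set" and Us :: "nat \<Rightarrow> (nat \<rightharpoonup> nat) set"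
  assumes "finite (dom f)" and "k \<ge> 1" and "n \<ge> 1"
    and "is_branching (k * (n - 1) + 1) f U"
    and "U = (\<Union>i<k. Us i)"
  shows "\<exists>i<k. \<exists>W. W \<subseteq> Us i \<and> is_branching n f W"
proof -
  obtain m where "m \<ge> 1" and U: "branch_ext (k * (n - 1) + 1) f m U"
    using assms(4) unfolding is_branching_def by blast
  have "U \<subseteq> (\<Union>i<k. Us i)" using assms(5) by simp
  from branch_ext_pigeonhole[OF U this] obtain i W
    where "i < k" "W \<subseteq> Us i" "branch_ext n f m W"
    by blast
  with \<open>m \<ge> 1\<close> show ?thesis unfolding is_branching_def by blast
qed

end
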